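(* Let $N$ be a perfect planar network in an annulus. Then each boundary measurement $M(i,j)$ of $N$ (for a source $b_i$ and a sink $b_j$) is a rational function of the parameter $\lambda$ and the edge weights $w_e$, $e\in E$.
   Context: A perfect planar network in an annulus $N=(G,\rho,w)$ consists of the following data. $G=(V,E)$ is a directed graph embedded in an annulus, considered up to isotopy relative to the boundary. Exactly $n$ of its vertices lie on the boundary circles (boundary vertices), some on the outer and some on the inner circle. Each boundary vertex is either a source (exactly one outgoing edge, no incoming edges) or a sink (exactly one incoming edge, no outgoing edges). Every internal vertex has degree $3$ and is either white (exactly one incoming edge) or black (exactly one outgoing edge). A cut $\rho$ is an oriented non-self-intersecting curve from a base point on the inner circle to a base point on the outer circle, both distinct from the boundary vertices, considered up to isotopy relative to its endpoints; $\mathrm{ind}(\gamma)$ is the algebraic intersection number of an oriented curve $\gamma$ with $\rho$. Each edge $e$ carries a weight $w_e$. A path is a sequence of edges $(e_1,\dots,e_r)$ with $e_i=(v_i,v_{i+1})$; edges may repeat. The concordance number $c(C)\in\mathbb Z/2\mathbb Z$ of a closed piecewise smooth curve without cusps is its rotation number mod 2. For a path $P$ from a source $b'$ to a sink $b''$, $C_P$ is the closed curve obtained by appending to $P$: if $b',b''$ lie on the same circle, the counterclockwise arc from $b''$ to $b'$; otherwise, the curve from $b''$ counterclockwise along its circle to the base point of $\rho$, along $\rho$ to the other base point, then counterclockwise along the other circle to $b'$. The weight of $P$ is $w_P(\lambda)=(-1)^{c(C_P)-1}\lambda^{\mathrm{ind}(P)}\prod_{e\in P}w_e$ (with multiplicity).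 The boundary measurement $M(i,j)$ is the (a priori formal) sum of $w_P$ over all paths from $b_i$ to $b_j$. *)

theory Defs
  imports "HOL-Analysis.Analysis"
begin

definition smooth_piece :: "(real \<Rightarrow> complex) \<Rightarrow> bool" where
  "smooth_piece g \<longleftrightarrow> (\<exists>g'. (\<forall>t\<in>{0..1}. (g has_vector_derivative g' t) (at t within {0..1}))
      \<and> continuous_on {0..1} g' \<and> (\<forall>t\<in>{0..1}. g' t \<noteq> 0))"

definition tangent :: "(real \<Rightarrow> complex) \<Rightarrow> real \<Rightarrow> complex" where
  "tangent g t = vector_derivative g (at t within {0..1})"

definition arg_change :: "(real \<Rightarrow> complex) \<Rightarrow> real" where
  "arg_change \<gamma> = (SOME d. \<exists>\<theta>. continuous_on {0..1} \<theta>
      \<and> (\<forall>t\<in>{0..1}. \<gamma> t = of_real (norm (\<gamma> t)) * exp (\<i> * of_real (\<theta> t)))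
      \<and> d = \<theta> 1 - \<theta> 0)"

text \<open>A closed piecewise smooth curve is given by the cyclic list of its smooth pieces.
  Corner turning angle from the end of one piece to the start of the next.\<close>
definition corner :: "(real \<Rightarrow> complex) \<Rightarrow> (real \<Rightarrow> complex) \<Rightarrow> complex" where
  "corner g h = tangent h 0 / tangent g 1"

definition closed_pw_smooth :: "(real \<Rightarrow> complex) list \<Rightarrow> bool" where
  "closed_pw_smooth gs \<longleftrightarrow> gs \<noteq> [] \<and> (\<forall>g\<in>set gs. smooth_piece g)
     \<and> (\<forall>k<length gs. (gs ! k) 1 = (gs ! ((k + 1) mod length gs)) 0)"

definition no_cusps :: "(real \<Rightarrow> complex) list \<Rightarrow> bool" where
  "no_cusps gs \<longleftrightarrow> (\<forall>k<length gs. \<not> (corner (gs ! k) (gs ! ((k + 1) mod length gs)) \<in> \<real>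
                        \<and> Re (corner (gs ! k) (gs ! ((k + 1) mod length gs))) < 0))"

definition total_turning :: "(real \<Rightarrow> complex) list \<Rightarrow> real" where
  "total_turning gs = (\<Sum>k<length gs. arg_change (tangent (gs ! k)))
     + (\<Sum>k<length gs. Arg (corner (gs ! k) (gs ! ((k + 1) mod length gs))))"

definition rotation_number :: "(real \<Rightarrow> complex) list \<Rightarrow> int" where
  "rotation_number gs = round (total_turning gs / (2 * pi))"

definition concordance :: "(real \<Rightarrow> complex) list \<Rightarrow> int" where
  "concordance gs = rotation_number gs mod 2"

text \<open>Counterclockwise emb of the circle |z| = |a| from a to b (a \<noteq> b, |a| = |b|).\<close>
definition ccw_arc :: "complex \<Rightarrow> complex \<Rightarrow> real \<Rightarrow> complex" where
  "ccw_arc a b = (let \<beta> = (if Arg (b / a) > 0 then Arg (b / a) else Arg (b / a) + 2 * pi)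
                  in (\<lambda>t. a * exp (\<i> * of_real (t * \<beta>))))"

fun path_of_pieces :: "(real \<Rightarrow> complex) list \<Rightarrow> real \<Rightarrow> complex" where
  "path_of_pieces [] = (\<lambda>t. 0)"
| "path_of_pieces [g] = g"
| "path_of_pieces (g # gs) = g +++ path_of_pieces gs"

definition annulus :: "real \<Rightarrow> real \<Rightarrow> complex set" where
  "annulus r1 r2 = {z. r1 \<le> norm z \<and> norm z \<le> r2}"

definition open_annulus :: "real \<Rightarrow> real \<Rightarrow> complex set" where
  "open_annulus r1 r2 = {z. r1 < norm z \<and> norm z < r2}"

definition indeg :: "('e::finite \<Rightarrow> 'v) \<Rightarrow> 'v \<Rightarrow> nat" where
  "indeg tgt v = card {e. tgt e = v}"

definition outdeg :: "('e::finite \<Rightarrow> 'v) \<Rightarrow> 'v \<Rightarrow> nat" where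
  "outdeg src v = card {e. src e = v}"

definition is_source :: "('e::finite \<Rightarrow> 'v) \<Rightarrow> ('e \<Rightarrow> 'v) \<Rightarrow> 'v \<Rightarrow> bool" where
  "is_source src tgt v \<longleftrightarrow> outdeg src v = 1 \<and> indeg tgt v = 0"

definition is_sink :: "('e::finite \<Rightarrow> 'v) \<Rightarrow> ('e \<Rightarrow> 'v) \<Rightarrow> 'v \<Rightarrow> bool" where
  "is_sink src tgt v \<longleftrightarrow> indeg tgt v = 1 \<and> outdeg src v = 0"

text \<open>
  B: boundary vertices; pos: position of vertices; emb e: the embedded edge
  (a smooth regular simple path from pos (src e) to pos (tgt e)); \<rho>: the cut.
\<close>
definition perfect_network ::
  "real \<Rightarrow> real \<Rightarrow> ('e::finite \<Rightarrow> 'v::finite) \<Rightarrow> ('e \<Rightarrow> 'v) \<Rightarrow> 'v set \<Rightarrow> ('v \<Rightarrow> complex)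
   \<Rightarrow> ('e \<Rightarrow> real \<Rightarrow> complex) \<Rightarrow> (real \<Rightarrow> complex) \<Rightarrow> bool" where
  "perfect_network r1 r2 src tgt B pos emb \<rho> \<longleftrightarrow>
     0 < r1 \<and> r1 < r2 \<and> inj pos
   \<comment> \<open>boundary vertices on the boundary circles, internal vertices inside\<close>
   \<and> (\<forall>v\<in>B. norm (pos v) = r1 \<or> norm (pos v) = r2)
   \<and> (\<forall>v. v \<notin> B \<longrightarrow> pos v \<in> open_annulus r1 r2)
   \<comment> \<open>boundary vertices are sources or sinks\<close>
   \<and> (\<forall>v\<in>B. is_source src tgt v \<or> is_sink src tgt v)
   \<comment> \<open>internal vertices: trivalent, white or black\<close>
   \<and> (\<forall>v. v \<notin> B \<longrightarrow> indeg tgt v + outdeg src v = 3 \<and> (indeg tgt v = 1 \<or> outdeg src v = 1))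
   \<comment> \<open>embedding of the edges\<close>
   \<and> (\<forall>e. smooth_piece (emb e) \<and> simple_path (emb e)
          \<and> emb e 0 = pos (src e) \<and> emb e 1 = pos (tgt e)
          \<and> (\<forall>t\<in>{0<..<1}. emb e t \<in> open_annulus r1 r2 \<and> emb e t \<notin> range pos))
   \<and> (\<forall>e f s t. e \<noteq> f \<longrightarrow> s \<in> {0..1} \<longrightarrow> t \<in> {0..1} \<longrightarrow> emb e s = emb f t
          \<longrightarrow> s \<in> {0, 1} \<and> t \<in> {0, 1})
   \<comment> \<open>the cut: a non-self-intersecting smooth curve from the inner to the outer circle,
       with base points distinct from the boundary vertices\<close>
   \<and> smooth_piece \<rho> \<and> arc \<rho>
   \<and> norm (\<rho> 0) = r1 \<and> norm (\<rho> 1) = r2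
   \<and> (\<forall>t\<in>{0<..<1}. \<rho> t \<in> open_annulus r1 r2)
   \<and> (\<forall>v\<in>B. pos v \<noteq> \<rho> 0 \<and> pos v \<noteq> \<rho> 1)"

definition walks :: "('e \<Rightarrow> 'v) \<Rightarrow> ('e \<Rightarrow> 'v) \<Rightarrow> 'v \<Rightarrow> 'v \<Rightarrow> 'e list set" where
  "walks src tgt a b = {P. P \<noteq> [] \<and> src (P ! 0) = a \<and> tgt (last P) = b
      \<and> (\<forall>k. Suc k < length P \<longrightarrow> tgt (P ! k) = src (P ! Suc k))}"

definition cut_arg :: "real \<Rightarrow> real \<Rightarrow> (real \<Rightarrow> complex) \<Rightarrow> complex \<Rightarrow> real" where
  "cut_arg r1 r2 \<rho> = (SOME \<phi>. continuous_on (annulus r1 r2 - path_image \<rho>) \<phi>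
      \<and> (\<forall>z\<in>annulus r1 r2 - path_image \<rho>. z = of_real (norm z) * exp (\<i> * of_real (\<phi> z))))"

text \<open>Algebraic intersection number of a curve (with endpoints off the cut) with the cut:
  the number of full turns around the annulus not accounted for by the slit argument.\<close>
definition ind :: "real \<Rightarrow> real \<Rightarrow> (real \<Rightarrow> complex) \<Rightarrow> (real \<Rightarrow> complex) \<Rightarrow> int" where
  "ind r1 r2 \<rho> \<gamma> = round ((cut_arg r1 r2 \<rho> (\<gamma> 1) - cut_arg r1 r2 \<rho> (\<gamma> 0) - arg_change \<gamma>) / (2 * pi))"

definition path_curve :: "('e \<Rightarrow> real \<Rightarrow> complex) \<Rightarrow> 'e list \<Rightarrow> real \<Rightarrow> complex" where
  "path_curve emb P = path_of_pieces (map emb P)"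

definition closing_curve ::
  "real \<Rightarrow> ('e \<Rightarrow> real \<Rightarrow> complex) \<Rightarrow> (real \<Rightarrow> complex) \<Rightarrow> complex \<Rightarrow> complex \<Rightarrow> 'e list
   \<Rightarrow> (real \<Rightarrow> complex) list" where
  "closing_curve r1 emb \<rho> b1 b2 P =
     map emb P @
     (if (norm b2 = r1) = (norm b1 = r1) then [ccw_arc b2 b1]
      else if norm b2 = r1 then [ccw_arc b2 (\<rho> 0), \<rho>, ccw_arc (\<rho> 1) b1]
      else [ccw_arc b2 (\<rho> 1), reversepath \<rho>, ccw_arc (\<rho> 0) b1])"

definition mult :: "'e list \<Rightarrow> 'e \<Rightarrow> nat" where
  "mult P e = length (filter (\<lambda>x. x = e) P)"

text \<open>Formal series: coefficient of  lambda^k * prod_e w_e^(m e).\<close>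
type_synonym 'e series = "int \<times> ('e \<Rightarrow> nat) \<Rightarrow> int"

definition boundary_measurement ::
  "real \<Rightarrow> real \<Rightarrow> ('e::finite \<Rightarrow> 'v) \<Rightarrow> ('e \<Rightarrow> 'v) \<Rightarrow> ('v \<Rightarrow> complex)
   \<Rightarrow> ('e \<Rightarrow> real \<Rightarrow> complex) \<Rightarrow> (real \<Rightarrow> complex) \<Rightarrow> 'v \<Rightarrow> 'v \<Rightarrow> 'e series" where
  "boundary_measurement r1 r2 src tgt pos emb \<rho> bi bj = (\<lambda>(k, m).
     \<Sum>P \<in> {P \<in> walks src tgt bi bj. mult P = m \<and> ind r1 r2 \<rho> (path_curve emb P) = k}.
        (- 1 :: int) ^ nat ((concordance (closing_curve r1 emb \<rho> (pos bi) (pos bj) P) - 1) mod 2))"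

definition finite_support :: "'e series \<Rightarrow> bool" where
  "finite_support p \<longleftrightarrow> finite {x. p x \<noteq> 0}"

definition poly_times :: "'e series \<Rightarrow> 'e series \<Rightarrow> 'e series" where
  "poly_times q F = (\<lambda>(k, m). \<Sum>(k1, m1) \<in> {(k1, m1). q (k1, m1) \<noteq> 0 \<and> m1 \<le> m}.
                        q (k1, m1) * F (k - k1, m - m1))"

text \<open>F is (the expansion of) a rational function p / q in lambda and the edge weights.\<close>
definition is_rational_series :: "'e series \<Rightarrow> bool" where
  "is_rational_series F \<longleftrightarrow> (\<exists>p q. finite_support p \<and> finite_support q \<and> q \<noteq> (\<lambda>_. 0)
                                   \<and> poly_times q F = p)"

end

theory Submission
  imports Defs "HOL-Library.Function_Algebras" "Jordan_Normal_Form.Determinant"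
begin

(* Fix the source b_i (with unique outgoing edge e1) and the sink b_j.  For a walk P from
   b_i to b_j with edge multiplicities m, two geometric facts reduce the sign and the
   lambda-exponent of P to local data:
   - the index ind(P) equals K0 - sum_e m(e) * n(e), where n(e) counts how many times the
     argument of edge e winds, so the lambda-exponent is determined by m;
   - the total turning of the closing curve C_P is a constant plus 2 pi times a sum of
     integers attached to edges and to pairs of consecutive edges, so the concordance sign
     factors as sigma * prod a(e) * prod b(e,f) over the edges and links of P.
   Hence M(i,j) is, up to a monomial substitution, the power series T_{e1} of signed walk
   weights.  These series satisfy the linear system T = c + N T, where N has entries without
   constant term; Cramer's rule over the ring of multivariate power series then exhibits
   det(I - N) (constant term 1) times T_{e1} as a polynomial. *)


section \<open>Exponent vectors and the ring of power series in the edge weights\<close>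

text \<open>An exponent vector \<open>'e \<Rightarrow> nat\<close> over a finite index type has only finitely many
  exponent vectors below it; this makes the Cauchy product a finite sum.\<close>
lemma finite_le_fun: "finite {a::'e::finite \<Rightarrow> nat. a \<le> m}"
proof -
  have "{a::'e \<Rightarrow> nat. a \<le> m} \<subseteq> PiE UNIV (\<lambda>e. {..m e})"
    by (auto simp: le_fun_def PiE_iff)
  moreover have "finite (PiE (UNIV::'e set) (\<lambda>e. {..m e}))"
    by (rule finite_PiE) auto
  ultimately show ?thesis by (rule finite_subset)
qed

definition conv :: "(('e::finite \<Rightarrow> nat) \<Rightarrow> int) \<Rightarrow> (('e \<Rightarrow> nat) \<Rightarrow> int) \<Rightarrow> ('e \<Rightarrow> nat) \<Rightarrow> int" where
  "conv f g m = (\<Sum>a\<in>{a. a \<le> m}. f a * g (m - a))"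

lemma diff_diff_fun: "a \<le> m \<Longrightarrow> (m::'e\<Rightarrow>nat) - (m - a) = a"
  by (auto simp: le_fun_def fun_eq_iff)

lemma diff_le_fun: "(m::'e\<Rightarrow>nat) - a \<le> m"
  by (auto simp: le_fun_def)

lemma diff_mono_fun: "a \<le> m \<Longrightarrow> (a::'e\<Rightarrow>nat) - b \<le> m - b"
  by (simp add: le_fun_def diff_le_mono)

lemma diff_diff_fun2: "b \<le> a \<Longrightarrow> a \<le> m \<Longrightarrow> (m::'e\<Rightarrow>nat) - b - (a - b) = m - a"
  by (auto simp: le_fun_def fun_eq_iff)

lemma add_le_fun: "c \<le> m - b \<Longrightarrow> b \<le> m \<Longrightarrow> b + c \<le> (m::'e\<Rightarrow>nat)"
  by (simp add: le_fun_def plus_fun_def) (metis add.commute le_diff_conv2)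

lemma le_add_fun: "b \<le> b + (c::'e\<Rightarrow>nat)"
  by (auto simp: le_fun_def plus_fun_def)

lemma add_diff_fun: "(b + c) - b = (c::'e\<Rightarrow>nat)"
  by (auto simp: fun_eq_iff plus_fun_def)

lemma diff_add_fun: "(m::'e\<Rightarrow>nat) - (b + c) = m - b - c"
  by (auto simp: fun_eq_iff plus_fun_def)

lemma add_diff_inverse_fun: "b \<le> a \<Longrightarrow> b + (a - b) = (a::'e\<Rightarrow>nat)"
  by (auto simp: le_fun_def fun_eq_iff plus_fun_def)

lemma conv_comm: "conv f g m = conv g f m"
  unfolding conv_def
  by (rule sum.reindex_bij_witness[where i="\<lambda>a. m - a" and j="\<lambda>a. m - a"])
     (auto simp: diff_diff_fun diff_le_fun mult.commute)

lemma conv_one: "conv (\<lambda>m. if m = 0 then 1 else 0) g m = g m"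
proof -
  have "conv (\<lambda>m. if m = 0 then 1 else 0) g m = (\<Sum>a\<in>{a. a \<le> m}. if a = 0 then g (m - a) else 0)"
    unfolding conv_def by (auto intro: sum.cong)
  also have "\<dots> = g m" using finite_le_fun[of m]
    by (simp add: sum.delta zero_fun_def le_fun_def fun_diff_def)
  finally show ?thesis .
qed

lemma conv_assoc: "conv (conv f g) h m = conv f (conv g h) m"
proof -
  let ?S = "SIGMA a:{a. a \<le> m}. {b. b \<le> a}"
  let ?T = "SIGMA b:{b. b \<le> m}. {c. c \<le> m - b}"
  have "conv (conv f g) h m = (\<Sum>a\<in>{a. a \<le> m}. \<Sum>b\<in>{b. b \<le> a}. f b * g (a - b) * h (m - a))"
    unfolding conv_def by (simp add: sum_distrib_right)
  also have "\<dots> = (\<Sum>(a,b)\<in>?S. f b * g (a - b) * h (m - a))"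
    by (rule sum.Sigma) (auto simp: finite_le_fun)
  also have "\<dots> = (\<Sum>(b,c)\<in>?T. f b * g c * h (m - b - c))"
    by (rule sum.reindex_bij_witness[where i="\<lambda>(b,c). ((b + c), b)" and j="\<lambda>(a,b). (b, a - b)"])
       (auto intro: order_trans simp: diff_mono_fun diff_diff_fun2 add_le_fun le_add_fun add_diff_fun diff_add_fun add_diff_inverse_fun)
  also have "\<dots> = (\<Sum>b\<in>{b. b \<le> m}. \<Sum>c\<in>{c. c \<le> m - b}. f b * g c * h (m - b - c))"
    by (rule sum.Sigma[symmetric]) (auto simp: finite_le_fun)
  also have "\<dots> = conv f (conv g h) m"
    unfolding conv_def by (simp add: sum_distrib_left mult.assoc)
  finally show ?thesis .
qed

text \<open>Formal power series with integer coefficients in variables indexed by a finite type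
  (the edge weights).\<close>
typedef (overloaded) 'e mps = "UNIV :: (('e::finite \<Rightarrow> nat) \<Rightarrow> int) set"
  morphisms coeff Abs_mps by simp

setup_lifting type_definition_mps

lemma mps_eqI: "(\<And>m. coeff x m = coeff y m) \<Longrightarrow> x = y"
  by (metis coeff_inject ext)

instantiation mps :: (finite) comm_ring_1
begin
lift_definition zero_mps :: "'a mps" is "\<lambda>_. 0" .
lift_definition one_mps :: "'a mps" is "\<lambda>m. if m = 0 then 1 else 0" .
lift_definition plus_mps :: "'a mps \<Rightarrow> 'a mps \<Rightarrow> 'a mps" is "\<lambda>f g m. f m + g m" .
lift_definition minus_mps :: "'a mps \<Rightarrow> 'a mps \<Rightarrow> 'a mps" is "\<lambda>f g m. f m - g m" .
lift_definition uminus_mps :: "'a mps \<Rightarrow> 'a mps" is "\<lambda>f m. - f m" .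
lift_definition times_mps :: "'a mps \<Rightarrow> 'a mps \<Rightarrow> 'a mps" is conv .
instance
proof
  fix a b c :: "'a mps"
  show "a * b * c = a * (b * c)" by transfer (simp add: fun_eq_iff conv_assoc)
  show "a * b = b * a" by transfer (simp add: fun_eq_iff conv_comm)
  show "1 * a = a" by transfer (rule ext, rule conv_one)
  show "(a + b) * c = a * c + b * c" by transfer (simp add: fun_eq_iff conv_def sum.distrib algebra_simps)
  show "a + b + c = a + (b + c)" by transfer (simp add: fun_eq_iff)
  show "a + b = b + a" by transfer (simp add: fun_eq_iff)
  show "0 + a = a" by transfer (simp add: fun_eq_iff)
  show "- a + a = 0" by transfer (simp add: fun_eq_iff)
  show "a - b = a + - b" by transfer (simp add: fun_eq_iff)
  show "(0::'a mps) \<noteq> 1" by transfer (auto dest: fun_cong[of _ _ 0])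
qed
end

lemma coeff_add[simp]: "coeff (x + y) m = coeff x m + coeff y m" by transfer simp

lemma coeff_diff[simp]: "coeff (x - y) m = coeff x m - coeff y m" by transfer simp

lemma coeff_uminus[simp]: "coeff (- x) m = - coeff x m" by transfer simp

lemma coeff_zero[simp]: "coeff 0 m = 0" by transfer simp

lemma coeff_one: "coeff 1 m = (if m = 0 then 1 else 0)" by transfer simp

lemma coeff_mult: "coeff (x * y) m = (\<Sum>a\<in>{a. a \<le> m}. coeff x a * coeff y (m - a))"
  by transfer (simp add: conv_def)

lemma coeff_sum: "coeff (sum f A) m = (\<Sum>x\<in>A. coeff (f x) m)"
  by (induction A rule: infinite_finite_induct) auto

section \<open>Polynomials, constant terms and Cramer's rule\<close>

definition is_poly :: "'e::finite mps \<Rightarrow> bool" where "is_poly x \<longleftrightarrow> finite {m. coeff x m \<noteq> 0}"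

definition const_coeff :: "'e::finite mps \<Rightarrow> int" where "const_coeff x = coeff x 0"

lemma is_poly_0[simp]: "is_poly 0" by (simp add: is_poly_def)

lemma is_poly_1[simp]: "is_poly 1" by (simp add: is_poly_def coeff_one)

lemma is_poly_add[simp]: "is_poly x \<Longrightarrow> is_poly y \<Longrightarrow> is_poly (x + y)"
  unfolding is_poly_def by (rule finite_subset[of _ "{m. coeff x m \<noteq> 0} \<union> {m. coeff y m \<noteq> 0}"]) auto

lemma is_poly_uminus[simp]: "is_poly x \<Longrightarrow> is_poly (- x)" by (simp add: is_poly_def)

lemma is_poly_diff[simp]: "is_poly x \<Longrightarrow> is_poly y \<Longrightarrow> is_poly (x - y)"
  unfolding is_poly_def by (rule finite_subset[of _ "{m. coeff x m \<noteq> 0} \<union> {m. coeff y m \<noteq> 0}"]) auto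

lemma is_poly_mult[simp]: assumes "is_poly x" "is_poly y" shows "is_poly (x * y)"
proof -
  let ?X = "{m. coeff x m \<noteq> 0}" and ?Y = "{m. coeff y m \<noteq> 0}"
  have "{m. coeff (x * y) m \<noteq> 0} \<subseteq> (\<lambda>(a,b). a + b) ` (?X \<times> ?Y)"
  proof
    fix m assume "m \<in> {m. coeff (x * y) m \<noteq> 0}"
    then have "(\<Sum>a\<in>{a. a \<le> m}. coeff x a * coeff y (m - a)) \<noteq> 0" by (simp add: coeff_mult)
    then obtain a where a: "a \<in> {a. a \<le> m}" "coeff x a * coeff y (m - a) \<noteq> 0"
      by (rule sum.not_neutral_contains_not_neutral)
    then have "m = a + (m - a)" by (simp add: add_diff_inverse_fun)
    have "coeff x a \<noteq> 0" "coeff y (m - a) \<noteq> 0" using a by auto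
    then show "m \<in> (\<lambda>(a,b). a + b) ` (?X \<times> ?Y)"
      using \<open>m = a + (m - a)\<close> by (auto intro!: image_eqI[where x="(a, m - a)"])
  qed
  moreover have "finite ((\<lambda>(a,b). a + b) ` (?X \<times> ?Y))" using assms by (simp add: is_poly_def)
  ultimately show ?thesis unfolding is_poly_def by (rule finite_subset)
qed

lemma is_poly_sum: "(\<And>x. x \<in> A \<Longrightarrow> is_poly (f x)) \<Longrightarrow> is_poly (sum f A)"
  by (induction A rule: infinite_finite_induct) auto

lemma is_poly_prod: "(\<And>x. x \<in> A \<Longrightarrow> is_poly (f x)) \<Longrightarrow> is_poly (prod f A)"
  by (induction A rule: infinite_finite_induct) auto

lemma const_coeff_add: "const_coeff (x + y) = const_coeff x + const_coeff y" by (simp add: const_coeff_def)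

lemma const_coeff_mult: "const_coeff (x * y) = const_coeff x * const_coeff y"
proof -
  have "{a. a \<le> (0::'a \<Rightarrow> nat)} = {0}" by (auto simp: le_fun_def zero_fun_def fun_eq_iff)
  moreover have "(0::'a\<Rightarrow>nat) - 0 = 0" by (simp add: zero_fun_def fun_eq_iff)
  ultimately show ?thesis by (simp add: const_coeff_def coeff_mult)
qed

lemma const_coeff_one: "const_coeff 1 = 1" by (simp add: const_coeff_def coeff_one)

lemma const_coeff_hom: "comm_ring_hom (const_coeff :: 'e::finite mps \<Rightarrow> int)"
  by unfold_locales (simp_all add: const_coeff_add const_coeff_mult const_coeff_one, simp add: const_coeff_def)

lemma is_poly_det: assumes A: "A \<in> carrier_mat n n" and f: "\<And>i j. i < n \<Longrightarrow> j < n \<Longrightarrow> is_poly (A $$ (i,j))"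
  shows "is_poly (det A)"
  unfolding det_def'[OF A]
proof (rule is_poly_sum)
  fix p assume "p \<in> {p. p permutes {0..<n}}"
  then have p: "p permutes {0..<n}" by simp
  have "is_poly (of_int (sign p) :: 'a mps)" by (simp add: sign_def)
  moreover have "is_poly (\<Prod>i = 0..<n. A $$ (i, p i))"
    by (rule is_poly_prod) (use p f permutes_in_image in auto)
  ultimately show "is_poly (of_int (sign p) * (\<Prod>i = 0..<n. A $$ (i, p i)))" by simp
qed

lemma rational_of_matrix_equation:
  fixes A :: "'x::finite mps mat" and x b :: "'x mps vec"
  assumes A: "A \<in> carrier_mat n n" and x: "x \<in> carrier_vec n" and Ax: "A *\<^sub>v x = b" and k: "k < n"
    and poly_A: "\<And>i j. i < n \<Longrightarrow> j < n \<Longrightarrow> is_poly (A $$ (i,j))"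
    and poly_b: "\<And>i. i < n \<Longrightarrow> is_poly (b $ i)"
    and unit: "map_mat const_coeff A = 1\<^sub>m n"
  shows "\<exists>q p. is_poly q \<and> is_poly p \<and> const_coeff q = 1 \<and> q * x $ k = p"
proof (intro exI conjI)
  show "is_poly (det A)" by (rule is_poly_det[OF A poly_A])
  show "is_poly (det (replace_col A b k))"
    by (rule is_poly_det[where n=n]) (use A poly_A poly_b in \<open>auto simp: replace_col_def\<close>)
  show "const_coeff (det A) = 1"
    using comm_ring_hom.hom_det[OF const_coeff_hom, of A] unit by simp
  show "det A * x $ k = det (replace_col A b k)"
    using cramer_lemma_mat[OF A x k] Ax by (simp add: mult.commute)
qed

lemma rational_of_linear_system:
  fixes T c :: "'s::finite \<Rightarrow> 'x::finite mps" and N :: "'s \<Rightarrow> 's \<Rightarrow> 'x mps"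
  assumes sys: "\<And>s. T s = c s + (\<Sum>t\<in>UNIV. N s t * T t)"
    and N: "\<And>s t. is_poly (N s t)" "\<And>s t. const_coeff (N s t) = 0" and c: "\<And>s. is_poly (c s)"
  shows "\<exists>q p. is_poly q \<and> is_poly p \<and> const_coeff q = 1 \<and> q * T s0 = p"
proof -
  define n where "n = card (UNIV :: 's set)"
  obtain h where h: "bij_betw h {0..<n} (UNIV :: 's set)"
    using ex_bij_betw_nat_finite[of "UNIV :: 's set"] n_def by auto
  define A where "A = mat n n (\<lambda>(i,j). (if i = j then 1 else 0) - N (h i) (h j))"
  define x where "x = vec n (\<lambda>i. T (h i))"
  define b where "b = vec n (\<lambda>i. c (h i))"
  have Ax: "A *\<^sub>v x = b"
  proof (rule eq_vecI)
    show "dim_vec (A *\<^sub>v x) = dim_vec b" by (simp add: A_def b_def)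
    fix i assume "i < dim_vec b"
    then have i: "i < n" by (simp add: b_def)
    have "(A *\<^sub>v x) $ i = (\<Sum>j = 0..<n. ((if i = j then 1 else 0) - N (h i) (h j)) * T (h j))"
      using i by (simp add: A_def x_def mult_mat_vec_def scalar_prod_def)
    also have "\<dots> = (\<Sum>j = 0..<n. (if i = j then T (h j) else 0)) - (\<Sum>j = 0..<n. N (h i) (h j) * T (h j))"
      by (simp add: left_diff_distrib sum_subtractf if_distrib[of "\<lambda>z. z * _"] cong: if_cong)
    also have "(\<Sum>j = 0..<n. (if i = j then T (h j) else 0)) = T (h i)" using i by (simp add: sum.delta)
    also have "(\<Sum>j = 0..<n. N (h i) (h j) * T (h j)) = (\<Sum>t\<in>UNIV. N (h i) t * T t)"
      using sum.reindex[of h "{0..<n}" "\<lambda>t. N (h i) t * T t"] h by (simp add: bij_betw_def)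
    also have "T (h i) - \<dots> = c (h i)" using sys[of "h i"] by simp
    finally show "(A *\<^sub>v x) $ i = b $ i" using i by (simp add: b_def)
  qed
  obtain k where k: "k < n" "h k = s0" using h by (metis atLeastLessThan_iff bij_betw_iff_bijections UNIV_I)
  have unit: "map_mat const_coeff A = 1\<^sub>m n"
    by (rule eq_matI) (auto simp: A_def const_coeff_def coeff_one N(2)[unfolded const_coeff_def])
  have "\<exists>q p. is_poly q \<and> is_poly p \<and> const_coeff q = 1 \<and> q * x $ k = p"
    by (rule rational_of_matrix_equation[OF _ _ Ax k(1) _ _ unit])
       (auto simp: A_def x_def b_def N c)
  then show ?thesis using k by (simp add: x_def)
qed

section \<open>Walks and their signed weight series\<close>

fun consecutive :: "('e \<Rightarrow> 'v) \<Rightarrow> ('e \<Rightarrow> 'v) \<Rightarrow> 'e list \<Rightarrow> bool" where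
  "consecutive src tgt [] = True"
| "consecutive src tgt [e] = True"
| "consecutive src tgt (e # f # r) = (tgt e = src f \<and> consecutive src tgt (f # r))"

lemma consecutive_iff: "consecutive src tgt P \<longleftrightarrow> (\<forall>k. Suc k < length P \<longrightarrow> tgt (P ! k) = src (P ! Suc k))"
proof (induction src tgt P rule: consecutive.induct)
  case (3 src tgt e f r)
  show ?case
  proof
    assume "consecutive src tgt (e # f # r)"
    then show "\<forall>k. Suc k < length (e # f # r) \<longrightarrow> tgt ((e # f # r) ! k) = src ((e # f # r) ! Suc k)"
      using 3 by (auto simp: nth_Cons split: nat.splits)
  next
    assume h: "\<forall>k. Suc k < length (e # f # r) \<longrightarrow> tgt ((e # f # r) ! k) = src ((e # f # r) ! Suc k)"
    have "tgt e = src f" using h[rule_format, of 0] by simp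
    moreover have "\<forall>k. Suc k < length (f # r) \<longrightarrow> tgt ((f # r) ! k) = src ((f # r) ! Suc k)"
      using h by (metis Suc_less_eq length_Cons nth_Cons_Suc)
    ultimately show "consecutive src tgt (e # f # r)" using 3 by simp
  qed
qed auto

fun link_weight :: "('e \<Rightarrow> int) \<Rightarrow> ('e \<Rightarrow> 'e \<Rightarrow> int) \<Rightarrow> 'e list \<Rightarrow> int" where
  "link_weight a b [] = 1"
| "link_weight a b [e] = a e"
| "link_weight a b (e # f # r) = a e * b e f * link_weight a b (f # r)"

definition unit_exp :: "'e \<Rightarrow> 'e \<Rightarrow> nat" where "unit_exp x = (\<lambda>e. if e = x then 1 else 0)"

lemma mult_Nil: "Defs.mult [] = 0" by (simp add: Defs.mult_def zero_fun_def fun_eq_iff)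

lemma mult_Cons: "Defs.mult (x # P) = (\<lambda>e. Defs.mult P e + unit_exp x e)"
  by (simp add: Defs.mult_def unit_exp_def fun_eq_iff)

lemma sum_mult_eq_length: "(\<Sum>e\<in>(UNIV::'e::finite set). Defs.mult P e) = length P"
proof (induction P)
  case Nil
  then show ?case by (simp add: mult_Nil zero_fun_def)
next
  case (Cons x P)
  have d: "(\<Sum>e\<in>(UNIV::'e set). unit_exp x e) = 1" unfolding unit_exp_def by simp
  have "(\<Sum>e\<in>(UNIV::'e set). Defs.mult (x # P) e) = (\<Sum>e\<in>UNIV. Defs.mult P e) + (\<Sum>e\<in>UNIV. unit_exp x e)"
    unfolding mult_Cons by (rule sum.distrib)
  then show ?case using Cons d by simp
qed

text \<open>Walks from the edge \<open>e\<close> to the sink \<open>bj\<close> with given edge multiplicities; there are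
  finitely many, since their length is the total multiplicity.\<close>
definition walks_by_exps :: "('e::finite \<Rightarrow> 'v) \<Rightarrow> ('e \<Rightarrow> 'v) \<Rightarrow> 'v \<Rightarrow> 'e \<Rightarrow> ('e \<Rightarrow> nat) \<Rightarrow> 'e list set" where
  "walks_by_exps src tgt bj e m = {P. P \<noteq> [] \<and> hd P = e \<and> consecutive src tgt P \<and> tgt (last P) = bj \<and> Defs.mult P = m}"

lemma finite_walks_by_exps: "finite (walks_by_exps src tgt bj e m)"
proof -
  have "walks_by_exps src tgt bj e m \<subseteq> {P. set P \<subseteq> UNIV \<and> length P = (\<Sum>e\<in>UNIV. m e)}"
    by (auto simp: walks_by_exps_def sum_mult_eq_length)
  then show ?thesis by (rule finite_subset) (use finite_lists_length_eq[OF finite_class.finite_UNIV, of "sum m UNIV"] in simp)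
qed

definition walk_coeff :: "('e::finite \<Rightarrow> 'v) \<Rightarrow> ('e \<Rightarrow> 'v) \<Rightarrow> 'v \<Rightarrow> ('e \<Rightarrow> int) \<Rightarrow> ('e \<Rightarrow> 'e \<Rightarrow> int) \<Rightarrow> 'e \<Rightarrow> ('e \<Rightarrow> nat) \<Rightarrow> int" where
  "walk_coeff src tgt bj a b e m = (\<Sum>P\<in>walks_by_exps src tgt bj e m. link_weight a b P)"

lemma walks_by_exps_empty:
  assumes "\<not> unit_exp e \<le> m"
  shows "walks_by_exps src tgt bj e m = {}"
proof (rule ccontr)
  assume "walks_by_exps src tgt bj e m \<noteq> {}"
  then obtain P where P: "P \<in> walks_by_exps src tgt bj e m" by auto
  then obtain r where "P = e # r" by (cases P) (auto simp: walks_by_exps_def)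
  then have "unit_exp e \<le> Defs.mult P" by (auto simp: mult_Cons le_fun_def)
  with P assms show False by (simp add: walks_by_exps_def)
qed

lemma walks_by_exps_single:
  "{P \<in> walks_by_exps src tgt bj e m. length P = 1}
     = (if tgt e = bj \<and> m = unit_exp e then {[e]} else {})"
proof -
  have "P \<in> walks_by_exps src tgt bj e m \<and> length P = 1 \<longleftrightarrow> P = [e] \<and> tgt e = bj \<and> m = unit_exp e" for P
  proof
    assume P: "P \<in> walks_by_exps src tgt bj e m \<and> length P = 1"
    then obtain x where "P = [x]" by (auto simp: length_Suc_conv)
    with P show "P = [e] \<and> tgt e = bj \<and> m = unit_exp e"
      by (auto simp: walks_by_exps_def mult_Cons mult_Nil zero_fun_def)
  qed (auto simp: walks_by_exps_def mult_Cons mult_Nil zero_fun_def)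
  then show ?thesis by auto
qed

lemma walk_coeff_long:
  assumes m: "unit_exp e \<le> m"
  shows "(\<Sum>P\<in>{P \<in> walks_by_exps src tgt bj e m. length P \<noteq> 1}. link_weight a b P)
       = a e * (\<Sum>f\<in>{f. src f = tgt e}. b e f * walk_coeff src tgt bj a b f (m - unit_exp e))"
proof -
  let ?B = "{P \<in> walks_by_exps src tgt bj e m. length P \<noteq> 1}"
  let ?S = "SIGMA f:{f. src f = tgt e}. walks_by_exps src tgt bj f (m - unit_exp e)"
  have "(\<Sum>P\<in>?B. link_weight a b P) = (\<Sum>(f,r)\<in>?S. a e * b e f * link_weight a b r)"
  proof (rule sum.reindex_bij_witness[where i="\<lambda>(f,r). e # r" and j="\<lambda>P. (hd (tl P), tl P)"])
    fix P assume P: "P \<in> ?B"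
    then obtain f r where Pr: "P = e # f # r"
      by (cases P; cases "tl P") (auto simp: walks_by_exps_def)
    have "Defs.mult (f # r) = m - unit_exp e"
    proof (rule ext)
      fix x
      have "Defs.mult P x = m x" using P by (simp add: walks_by_exps_def)
      then show "Defs.mult (f # r) x = (m - unit_exp e) x" unfolding Pr mult_Cons by simp
    qed
    then show "(hd (tl P), tl P) \<in> ?S" using P by (auto simp: Pr walks_by_exps_def)
    show "(\<lambda>(f,r). e # r) (hd (tl P), tl P) = P" using Pr by simp
    show "(case (hd (tl P), tl P) of (f, r) \<Rightarrow> a e * b e f * link_weight a b r) = link_weight a b P"
      by (simp add: Pr)
  next
    fix x assume x: "x \<in> ?S"
    obtain f r where xr: "x = (f, r)" by (cases x)
    with x have r: "r \<noteq> []" "hd r = f" "consecutive src tgt r" "tgt (last r) = bj"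
        "Defs.mult r = m - unit_exp e" "src f = tgt e"
      by (auto simp: walks_by_exps_def)
    then obtain r' where r': "r = f # r'" by (cases r) auto
    have "Defs.mult (e # r) = m" using r(5) m by (auto simp: mult_Cons fun_eq_iff le_fun_def)
    then show "(\<lambda>(f,r). e # r) x \<in> ?B" using r r' xr by (auto simp: walks_by_exps_def)
    show "(hd (tl ((\<lambda>(f,r). e # r) x)), tl ((\<lambda>(f,r). e # r) x)) = x" using xr r' by simp
  qed
  also have "\<dots> = (\<Sum>f\<in>{f. src f = tgt e}. \<Sum>r\<in>walks_by_exps src tgt bj f (m - unit_exp e).
                     a e * b e f * link_weight a b r)"
    by (rule sum.Sigma[symmetric]) (auto simp: finite_walks_by_exps)
  also have "\<dots> = a e * (\<Sum>f\<in>{f. src f = tgt e}. b e f * walk_coeff src tgt bj a b f (m - unit_exp e))"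
    by (simp add: walk_coeff_def sum_distrib_left mult.assoc)
  finally show ?thesis .
qed

lemma walk_coeff_recursion:
  "walk_coeff src tgt bj a b e m = (if unit_exp e \<le> m then a e * ((if tgt e = bj \<and> m = unit_exp e then 1 else 0)
      + (\<Sum>f\<in>{f. src f = tgt e}. b e f * walk_coeff src tgt bj a b f (m - unit_exp e))) else 0)"
proof (cases "unit_exp e \<le> m")
  case True
  let ?W = "walks_by_exps src tgt bj e m"
  have "walk_coeff src tgt bj a b e m
      = (\<Sum>P\<in>{P \<in> ?W. length P = 1}. link_weight a b P) + (\<Sum>P\<in>{P \<in> ?W. length P \<noteq> 1}. link_weight a b P)"
    unfolding walk_coeff_def using finite_walks_by_exps[of src tgt bj e m]
    by (subst sum.union_disjoint[symmetric]) (auto intro: sum.cong)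
  also have "\<dots> = a e * ((if tgt e = bj \<and> m = unit_exp e then 1 else 0)
      + (\<Sum>f\<in>{f. src f = tgt e}. b e f * walk_coeff src tgt bj a b f (m - unit_exp e)))"
    unfolding walks_by_exps_single walk_coeff_long[OF True] by (simp add: algebra_simps)
  finally show ?thesis using True by simp
qed (simp add: walk_coeff_def walks_by_exps_empty)

definition walk_series :: "('e::finite \<Rightarrow> 'v) \<Rightarrow> ('e \<Rightarrow> 'v) \<Rightarrow> 'v \<Rightarrow> ('e \<Rightarrow> int) \<Rightarrow> ('e \<Rightarrow> 'e \<Rightarrow> int)
    \<Rightarrow> 'e \<Rightarrow> 'e mps" where
  "walk_series src tgt bj a b e = Abs_mps (walk_coeff src tgt bj a b e)"

lemma coeff_Abs[simp]: "mps.coeff (Abs_mps f) m = f m"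
  by (simp add: Abs_mps_inverse)

lemma coeff_monomial_mult: "coeff (Abs_mps (\<lambda>x. if x = d then r else 0) * y) m = (if d \<le> m then r * coeff y (m - d) else 0)"
proof -
  have "coeff (Abs_mps (\<lambda>x. if x = d then r else 0) * y) m = (\<Sum>x\<in>{x. x \<le> m}. if x = d then r * coeff y (m - x) else 0)"
    by (simp add: coeff_mult if_distrib[of "\<lambda>z. z * _"] cong: if_cong)
  also have "\<dots> = (if d \<le> m then r * coeff y (m - d) else 0)"
    using finite_le_fun[of m] by (simp add: sum.delta)
  finally show ?thesis .
qed

text \<open>The walk recursion is a linear system \<open>T = c + N T\<close> with monomial entries of positive
  degree in \<open>N\<close>; hence every walk series is rational.\<close>
lemma walk_series_rational:
  fixes src tgt :: "'e::finite \<Rightarrow> 'v"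
  shows "\<exists>q p. is_poly q \<and> is_poly p \<and> const_coeff q = 1 \<and> q * walk_series src tgt bj a b e0 = p"
proof (rule rational_of_linear_system)
  let ?T = "walk_series src tgt bj a b"
  define c :: "'e \<Rightarrow> 'e mps" where
    "c e = Abs_mps (\<lambda>m. if m = unit_exp e then (if tgt e = bj then a e else 0) else 0)" for e
  define N :: "'e \<Rightarrow> 'e \<Rightarrow> 'e mps" where
    "N e f = Abs_mps (\<lambda>m. if m = unit_exp e then (if src f = tgt e then a e * b e f else 0) else 0)" for e f
  have coeff_T: "coeff (?T f) m = walk_coeff src tgt bj a b f m" for f m
    by (simp add: walk_series_def)
  show "?T e = c e + (\<Sum>f\<in>UNIV. N e f * ?T f)" for e
  proof (rule mps_eqI)
    fix m
    have "coeff (\<Sum>f\<in>UNIV. N e f * ?T f) m = (\<Sum>f\<in>UNIV. if unit_exp e \<le> m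
        then (if src f = tgt e then a e * b e f else 0) * walk_coeff src tgt bj a b f (m - unit_exp e) else 0)"
      by (simp add: coeff_sum N_def coeff_monomial_mult, simp only: coeff_T)
    also have "\<dots> = (if unit_exp e \<le> m
        then a e * (\<Sum>f\<in>{f. src f = tgt e}. b e f * walk_coeff src tgt bj a b f (m - unit_exp e)) else 0)"
      by (simp add: sum.inter_filter[symmetric] sum_distrib_left mult.assoc if_distrib[of "\<lambda>z. z * _"] cong: if_cong)
    finally show "coeff (?T e) m = coeff (c e + (\<Sum>f\<in>UNIV. N e f * ?T f)) m"
      by (subst coeff_T, subst walk_coeff_recursion) (auto simp: c_def algebra_simps)
  qed
  have "unit_exp e \<noteq> 0" for e :: 'e by (auto simp: unit_exp_def zero_fun_def fun_eq_iff)
  then show "const_coeff (N e f) = 0" for e f by (simp add: const_coeff_def N_def)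
  show "is_poly (N e f)" for e f
    unfolding is_poly_def N_def by (rule finite_subset[of _ "{unit_exp e}"]) auto
  show "is_poly (c e)" for e
    unfolding is_poly_def c_def by (rule finite_subset[of _ "{unit_exp e}"]) auto
qed

section \<open>Substituting the spectral parameter\<close>

definition exp_pairing :: "('e::finite \<Rightarrow> int) \<Rightarrow> ('e \<Rightarrow> nat) \<Rightarrow> int" where
  "exp_pairing nE m = (\<Sum>e\<in>UNIV. int (m e) * nE e)"

lemma exp_pairing_diff: "m1 \<le> m \<Longrightarrow> exp_pairing nE (m - m1) = exp_pairing nE m - exp_pairing nE m1"
  unfolding exp_pairing_def by (simp add: sum_subtractf[symmetric] le_fun_def of_nat_diff left_diff_distrib)

text \<open>Substituting \<open>\<lambda>\<^bsup>K - \<langle>nE, m\<rangle>\<^esup>\<close> into the monomial with exponent vector \<open>m\<close> turns a power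
  series in the edge weights into a series in \<open>\<lambda>\<close> and the edge weights.\<close>
definition graded :: "int \<Rightarrow> ('e::finite \<Rightarrow> int) \<Rightarrow> (('e \<Rightarrow> nat) \<Rightarrow> int) \<Rightarrow> 'e series" where
  "graded K nE f = (\<lambda>(k, m). if k = K - exp_pairing nE m then f m else 0)"

lemma finite_support_graded:
  assumes "finite {m. f m \<noteq> 0}"
  shows "finite_support (graded K nE f)"
  unfolding finite_support_def
proof (rule finite_subset)
  show "{x. graded K nE f x \<noteq> 0} \<subseteq> (\<lambda>m. (K - exp_pairing nE m, m)) ` {m. f m \<noteq> 0}"
    by (auto simp: graded_def split: if_splits)
  show "finite ((\<lambda>m. (K - exp_pairing nE m, m)) ` {m. f m \<noteq> 0})" using assms by simp
qed

lemma poly_times_graded: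
  "poly_times (graded 0 nE g) (graded K nE f) = graded K nE (conv g f)"
proof (rule ext, clarify)
  fix k m
  define J where "J = {m1. g m1 \<noteq> 0 \<and> m1 \<le> m}"
  have I: "{(k1, m1). graded 0 nE g (k1, m1) \<noteq> 0 \<and> m1 \<le> m} = (\<lambda>m1. (- exp_pairing nE m1, m1)) ` J"
    by (auto simp: graded_def J_def split: if_splits)
  have "poly_times (graded 0 nE g) (graded K nE f) (k, m)
      = (\<Sum>m1\<in>J. g m1 * graded K nE f (k + exp_pairing nE m1, m - m1))"
    unfolding poly_times_def by (simp only: I case_prod_conv, subst sum.reindex) (auto simp: inj_on_def graded_def)
  also have "\<dots> = (\<Sum>m1\<in>J. if k = K - exp_pairing nE m then g m1 * f (m - m1) else 0)"
    by (rule sum.cong) (auto simp: J_def graded_def exp_pairing_diff)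
  also have "\<dots> = graded K nE (conv g f) (k, m)"
    unfolding graded_def conv_def
    by (auto intro!: sum.mono_neutral_left simp: J_def finite_le_fun)
  finally show "poly_times (graded 0 nE g) (graded K nE f) (k, m) = graded K nE (conv g f) (k, m)" .
qed

lemma rational_of_graded_series:
  assumes q: "is_poly q" "is_poly p" "const_coeff q = 1" "q * T = p"
  shows "is_rational_series (graded K nE (\<lambda>m. \<sigma> * coeff T m))"
  unfolding is_rational_series_def
proof (intro exI conjI)
  show "finite_support (graded K nE (\<lambda>m. \<sigma> * coeff p m))"
    using q(2) by (intro finite_support_graded) (auto simp: is_poly_def elim: finite_subset[rotated])
  show "finite_support (graded 0 nE (coeff q))"
    using q(1) by (intro finite_support_graded) (simp add: is_poly_def)
  show "graded 0 nE (coeff q) \<noteq> (\<lambda>_. 0)"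
  proof
    assume "graded 0 nE (coeff q) = (\<lambda>_. 0)"
    then have "graded 0 nE (coeff q) (0, 0) = 0" by simp
    then show False using q(3) by (simp add: graded_def exp_pairing_def zero_fun_def const_coeff_def)
  qed
  have "conv (coeff q) (\<lambda>m. \<sigma> * coeff T m) = (\<lambda>m. \<sigma> * coeff p m)"
    using q(4)[symmetric] by (simp add: fun_eq_iff conv_def coeff_mult sum_distrib_left mult.left_commute)
  then show "poly_times (graded 0 nE (coeff q)) (graded K nE (\<lambda>m. \<sigma> * coeff T m))
      = graded K nE (\<lambda>m. \<sigma> * coeff p m)"
    by (simp add: poly_times_graded)
qed

section \<open>Argument change of plane curves\<close>

definition arg_lift :: "(real \<Rightarrow> complex) \<Rightarrow> (real \<Rightarrow> real) \<Rightarrow> bool" where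
  "arg_lift \<gamma> \<theta> \<longleftrightarrow> continuous_on {0..1} \<theta>
      \<and> (\<forall>t\<in>{0..1}. \<gamma> t = of_real (norm (\<gamma> t)) * exp (\<i> * of_real (\<theta> t)))"

lemma exp_i_eq: assumes "exp (\<i> * of_real x) = exp (\<i> * of_real y)"
  shows "\<exists>n::int. x = y + 2 * pi * of_int n"
proof -
  obtain n where "\<i> * of_real x = \<i> * of_real y + complex_of_real (real_of_int (2 * n) * pi) * \<i>"
    using assms exp_eq by blast
  then have "Im (\<i> * of_real x) = Im (\<i> * of_real y + complex_of_real (real_of_int (2 * n) * pi) * \<i>)"
    by simp
  then have "x = y + 2 * pi * of_int n" by simp
  then show ?thesis by blast
qed

lemma exp_i_eq_polar: assumes "z = of_real (norm z) * exp (\<i> * of_real x)" "z = of_real (norm z) * exp (\<i> * of_real y)" "z \<noteq> 0"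
  shows "\<exists>n::int. x = y + 2 * pi * of_int n"
proof -
  have "of_real (norm z) \<noteq> (0::complex)" using assms(3) by simp
  then have "exp (\<i> * of_real x) = exp (\<i> * of_real y)" using assms(1,2) by (metis mult_left_cancel)
  then show ?thesis by (rule exp_i_eq)
qed

text \<open>Paths avoiding the origin have a continuous argument, and its change is independent
  of the chosen lift; so \<open>arg_change\<close> is that change.\<close>
lemma lift_exists:
  assumes c: "continuous_on {0..1} \<gamma>" and nz: "\<And>t. t \<in> {0..1} \<Longrightarrow> \<gamma> t \<noteq> 0"
  shows "\<exists>\<theta>. arg_lift \<gamma> \<theta>"
proof -
  obtain g where g: "continuous_on {0..1::real} g" "\<And>x. x \<in> {0..1} \<Longrightarrow> \<gamma> x = exp (g x)"
    using continuous_logarithm_on_contractible[OF c convex_imp_contractible[OF convex_real_interval(5)] nz]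
    by metis
  have "continuous_on {0..1} (\<lambda>t. Im (g t))"
    by (intro continuous_intros g(1))
  moreover have "\<gamma> t = of_real (norm (\<gamma> t)) * exp (\<i> * of_real (Im (g t)))" if "t \<in> {0..1}" for t
    using g(2)[OF that] by (simp add: exp_eq_polar[of "g t"] cis_conv_exp norm_exp_eq_Re norm_mult)
  ultimately show ?thesis unfolding arg_lift_def by blast
qed

lemma lift_unique:
  assumes l1: "arg_lift \<gamma> \<theta>" and l2: "arg_lift \<gamma> \<theta>'" and nz: "\<And>t. t \<in> {0..1} \<Longrightarrow> \<gamma> t \<noteq> 0"
  shows "\<theta> 1 - \<theta> 0 = \<theta>' 1 - \<theta>' 0"
proof -
  define k where "k t = (\<theta> t - \<theta>' t) / (2 * pi)" for t
  have kint: "k t \<in> \<int>" if tt: "t \<in> {0..1}" for t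
  proof -
    have h1: "\<gamma> t = of_real (norm (\<gamma> t)) * exp (\<i> * of_real (\<theta> t))" using l1 tt unfolding arg_lift_def by blast
    have h2: "\<gamma> t = of_real (norm (\<gamma> t)) * exp (\<i> * of_real (\<theta>' t))" using l2 tt unfolding arg_lift_def by blast
    obtain n :: int where "\<theta> t = \<theta>' t + 2 * pi * of_int n"
      using exp_i_eq_polar[OF h1 h2 nz[OF tt]] by blast
    then have "k t = of_int n" by (simp add: k_def)
    then show ?thesis by simp
  qed
  have "continuous_on {0..1} k"
    unfolding k_def using l1 l2 unfolding arg_lift_def by (intro continuous_intros) auto
  then have "k constant_on {0..1}"
  proof (rule continuous_discrete_range_constant[OF connected_Icc])
    fix x assume x: "x \<in> {0..(1::real)}"
    show "\<exists>e>0. \<forall>y. y \<in> {0..1} \<and> k y \<noteq> k x \<longrightarrow> e \<le> norm (k y - k x)"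
    proof (intro exI[of _ 1] conjI allI impI)
      fix y assume y: "y \<in> {0..1} \<and> k y \<noteq> k x"
      obtain a where a: "k x = of_int a" using kint[OF x] Ints_cases by blast
      obtain b where b: "k y = of_int b" using kint y Ints_cases by blast
      have "a \<noteq> b" using a b y by auto
      then have "1 \<le> \<bar>b - a\<bar>" by simp
      then show "1 \<le> norm (k y - k x)" using a b by (simp del: of_int_diff add: of_int_diff[symmetric])
    qed simp
  qed
  then have "k 1 = k 0" unfolding constant_on_def by force
  then show ?thesis by (simp add: k_def)
qed

lemma arg_change_eq:
  assumes "arg_lift \<gamma> \<theta>" "\<And>t. t \<in> {0..1} \<Longrightarrow> \<gamma> t \<noteq> 0"
  shows "arg_change \<gamma> = \<theta> 1 - \<theta> 0"
proof -
  have ex: "\<exists>d \<theta>. continuous_on {0..1} \<theta>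
      \<and> (\<forall>t\<in>{0..1}. \<gamma> t = of_real (norm (\<gamma> t)) * exp (\<i> * of_real (\<theta> t)))
      \<and> d = \<theta> 1 - \<theta> 0" using assms(1) unfolding arg_lift_def by blast
  obtain \<theta>' where "arg_lift \<gamma> \<theta>'" "arg_change \<gamma> = \<theta>' 1 - \<theta>' 0"
    using someI_ex[OF ex] unfolding arg_change_def arg_lift_def by blast
  then show ?thesis using lift_unique[OF _ assms(1) assms(2)] by simp
qed

lemma arg_change_Arg:
  assumes c: "continuous_on {0..1} \<gamma>" and nz: "\<And>t. t \<in> {0..1} \<Longrightarrow> \<gamma> t \<noteq> 0"
  shows "\<exists>n::int. arg_change \<gamma> = Arg (\<gamma> 1) - Arg (\<gamma> 0) + 2 * pi * of_int n"
proof -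
  obtain \<theta> where l: "arg_lift \<gamma> \<theta>" using lift_exists[OF c nz] by blast
  have a: "arg_change \<gamma> = \<theta> 1 - \<theta> 0" by (rule arg_change_eq[OF l nz])
  obtain n1 :: int where n1: "\<theta> 1 = Arg (\<gamma> 1) + 2 * pi * of_int n1"
    using exp_i_eq_polar[of "\<gamma> 1" "\<theta> 1" "Arg (\<gamma> 1)"] l nz[of 1] Arg_eq[of "\<gamma> 1"] unfolding arg_lift_def by auto
  obtain n0 :: int where n0: "\<theta> 0 = Arg (\<gamma> 0) + 2 * pi * of_int n0"
    using exp_i_eq_polar[of "\<gamma> 0" "\<theta> 0" "Arg (\<gamma> 0)"] l nz[of 0] Arg_eq[of "\<gamma> 0"] unfolding arg_lift_def by auto
  have "arg_change \<gamma> = Arg (\<gamma> 1) - Arg (\<gamma> 0) + 2 * pi * of_int (n1 - n0)"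
    using a n1 n0 by (simp add: algebra_simps)
  then show ?thesis by blast
qed

lemma Arg_div: assumes "z \<noteq> 0" "w \<noteq> 0"
  shows "\<exists>n::int. Arg (z / w) = Arg z - Arg w + 2 * pi * of_int n"
proof -
  have zw: "z / w \<noteq> 0" using assms by simp
  have "z / w = (of_real (norm z) * exp (\<i> * of_real (Arg z))) / (of_real (norm w) * exp (\<i> * of_real (Arg w)))"
    using Arg_eq[OF assms(1)] Arg_eq[OF assms(2)] by simp
  also have "\<dots> = of_real (norm (z / w)) * exp (\<i> * of_real (Arg z - Arg w))"
    by (simp add: exp_diff norm_divide algebra_simps)
  finally have "z / w = of_real (norm (z / w)) * exp (\<i> * of_real (Arg z - Arg w))" .
  then obtain n :: int where "Arg (z / w) = Arg z - Arg w + 2 * pi * of_int n"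
    using exp_i_eq_polar[OF Arg_eq[OF zw]] zw by blast
  then show ?thesis by blast
qed

lemma round_add_int: "round (x + of_int n) = round x + n"
  unfolding round_def using floor_add_int[of "x + 1/2" n] by (simp add: algebra_simps)

lemma arg_lift_shift:
  assumes "arg_lift h \<theta>"
  shows "arg_lift h (\<lambda>t. \<theta> t - 2 * pi * of_int n)"
proof -
  have "exp (\<i> * of_real (\<theta> t - 2 * pi * of_int n)) = exp (\<i> * of_real (\<theta> t))" for t
  proof -
    have "\<i> * of_real (\<theta> t - 2 * pi * of_int n) = \<i> * of_real (\<theta> t) + \<i> * (of_int (- n) * (of_real pi * 2))"
      by (simp add: algebra_simps)
    then show ?thesis by (simp only: exp_plus_2pin)
  qed
  then show ?thesis
    using assms unfolding arg_lift_def by (auto intro!: continuous_intros)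
qed

lemma arg_lift_join:
  assumes lg: "arg_lift g \<theta>g" and lh: "arg_lift h \<theta>h" and j: "\<theta>g 1 = \<theta>h 0"
  shows "arg_lift (g +++ h) (\<theta>g +++ \<theta>h)"
  unfolding arg_lift_def
proof (intro conjI ballI)
  show "continuous_on {0..1} (\<theta>g +++ \<theta>h)"
    using lg lh j by (intro continuous_on_joinpaths) (auto simp: arg_lift_def pathfinish_def pathstart_def)
  fix t :: real assume t: "t \<in> {0..1}"
  show "(g +++ h) t = of_real (norm ((g +++ h) t)) * exp (\<i> * of_real ((\<theta>g +++ \<theta>h) t))"
  proof (cases "t \<le> 1/2")
    case True
    then show ?thesis using lg t unfolding arg_lift_def joinpaths_def by auto
  next
    case False
    then show ?thesis using lh t unfolding arg_lift_def joinpaths_def by auto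
  qed
qed

lemma arg_change_join:
  assumes cg: "continuous_on {0..1} g" and ch: "continuous_on {0..1} h"
    and nzg: "\<And>t. t \<in> {0..1} \<Longrightarrow> g t \<noteq> 0" and nzh: "\<And>t. t \<in> {0..1} \<Longrightarrow> h t \<noteq> 0"
    and j: "g 1 = h 0"
  shows "arg_change (g +++ h) = arg_change g + arg_change h"
proof -
  obtain \<theta>g where lg: "arg_lift g \<theta>g" using lift_exists[OF cg nzg] by blast
  obtain \<theta>h where lh: "arg_lift h \<theta>h" using lift_exists[OF ch nzh] by blast
  have "g 1 = of_real (norm (g 1)) * exp (\<i> * of_real (\<theta>g 1))" using lg unfolding arg_lift_def by auto
  moreover have "g 1 = of_real (norm (g 1)) * exp (\<i> * of_real (\<theta>h 0))" using lh j unfolding arg_lift_def by auto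
  ultimately obtain n :: int where n: "\<theta>h 0 = \<theta>g 1 + 2 * pi * of_int n"
    using exp_i_eq_polar[of "g 1" "\<theta>h 0" "\<theta>g 1"] nzg[of 1] by auto
  define \<theta>h' where "\<theta>h' t = \<theta>h t - 2 * pi * of_int n" for t
  have lh': "arg_lift h \<theta>h'" unfolding \<theta>h'_def by (rule arg_lift_shift[OF lh])
  have nz: "(g +++ h) t \<noteq> 0" if "t \<in> {0..1}" for t
    using that nzg nzh by (auto simp: joinpaths_def)
  have l: "arg_lift (g +++ h) (\<theta>g +++ \<theta>h')"
    by (rule arg_lift_join[OF lg lh']) (simp add: \<theta>h'_def n)
  have "arg_change (g +++ h) = (\<theta>g +++ \<theta>h') 1 - (\<theta>g +++ \<theta>h') 0" by (rule arg_change_eq[OF l nz])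
  also have "\<dots> = (\<theta>g 1 - \<theta>g 0) + (\<theta>h 1 - \<theta>h 0)" using n by (simp add: joinpaths_def \<theta>h'_def)
  also have "\<dots> = arg_change g + arg_change h"
    using arg_change_eq[OF lg nzg] arg_change_eq[OF lh nzh] by simp
  finally show ?thesis .
qed

definition nonzero_path :: "(real \<Rightarrow> complex) \<Rightarrow> bool" where
  "nonzero_path g \<longleftrightarrow> continuous_on {0..1} g \<and> (\<forall>t\<in>{0..1}. g t \<noteq> 0)"

fun joined :: "(real \<Rightarrow> complex) list \<Rightarrow> bool" where
  "joined [] = True"
| "joined [g] = True"
| "joined (g # h # r) = (g 1 = h 0 \<and> joined (h # r))"

lemma pieces_path_props: "gs \<noteq> [] \<Longrightarrow> (\<forall>g\<in>set gs. nonzero_path g) \<Longrightarrow> joined gs \<Longrightarrow>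
   nonzero_path (path_of_pieces gs) \<and> path_of_pieces gs 0 = hd gs 0 \<and> path_of_pieces gs 1 = last gs 1 \<and>
   arg_change (path_of_pieces gs) = sum_list (map arg_change gs)"
proof (induction gs rule: path_of_pieces.induct)
  case 1
  then show ?case by simp
next
  case (2 g)
  then show ?case by simp
next
  case (3 g v vs)
  let ?h = "path_of_pieces (v # vs)"
  have IH: "nonzero_path ?h" "?h 0 = v 0" "?h 1 = last (v # vs) 1" "arg_change ?h = sum_list (map arg_change (v # vs))"
    using 3 by auto
  have g: "nonzero_path g" "g 1 = v 0" using 3 by auto
  have ok: "nonzero_path (g +++ ?h)"
    unfolding nonzero_path_def
  proof (intro conjI ballI)
    show "continuous_on {0..1} (g +++ ?h)"
      using g IH by (intro continuous_on_joinpaths) (auto simp: nonzero_path_def pathfinish_def pathstart_def)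
    fix t :: real assume "t \<in> {0..1}"
    then show "(g +++ ?h) t \<noteq> 0" using g(1) IH(1) by (auto simp: nonzero_path_def joinpaths_def)
  qed
  have "arg_change (g +++ ?h) = arg_change g + arg_change ?h"
    using g IH by (intro arg_change_join) (auto simp: nonzero_path_def)
  then show ?case using ok IH g by (simp add: joinpaths_def)
qed

lemma smooth_piece_continuous: "smooth_piece g \<Longrightarrow> continuous_on {0..1} g"
  unfolding smooth_piece_def
  by (auto simp: continuous_on_eq_continuous_within intro: has_vector_derivative_continuous)

lemma tangent_nonzero: assumes "smooth_piece g" shows "nonzero_path (tangent g)"
proof -
  obtain g' where g': "\<forall>t\<in>{0..1}. (g has_vector_derivative g' t) (at t within {0..1})"
      "continuous_on {0..1} g'" "\<forall>t\<in>{0..1}. g' t \<noteq> 0"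
    using assms unfolding smooth_piece_def by blast
  have eq: "tangent g t = g' t" if "t \<in> {0..1}" for t
    unfolding tangent_def using that g'(1) by (intro vector_derivative_within_closed_interval) auto
  show ?thesis unfolding nonzero_path_def
    using continuous_on_eq[OF g'(2), of "tangent g"] eq g'(3) by auto
qed

lemma network_curve_facts:
  assumes net: "perfect_network r1 r2 src tgt B pos emb \<rho>"
  shows "\<And>e. emb e 0 = pos (src e)" "\<And>e. emb e 1 = pos (tgt e)" "\<And>e. nonzero_path (emb e)"
    "\<And>e. nonzero_path (tangent (emb e))"
proof -
  have r: "0 < r1" "r1 < r2" using net by (auto simp: perfect_network_def)
  have pnz: "pos v \<noteq> 0" for v
  proof (cases "v \<in> B")
    case True
    then have "norm (pos v) = r1 \<or> norm (pos v) = r2" using net by (auto simp: perfect_network_def)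
    then show ?thesis using r by auto
  next
    case False
    then have "pos v \<in> open_annulus r1 r2" using net by (auto simp: perfect_network_def)
    then show ?thesis using r by (auto simp: open_annulus_def)
  qed
  have E: "smooth_piece (emb e) \<and> emb e 0 = pos (src e) \<and> emb e 1 = pos (tgt e)
          \<and> (\<forall>t\<in>{0<..<1}. emb e t \<in> open_annulus r1 r2)" for e
    using net unfolding perfect_network_def by blast
  have sm: "smooth_piece (emb e)" for e using E by blast
  show e0: "emb e 0 = pos (src e)" for e using E by blast
  show e1: "emb e 1 = pos (tgt e)" for e using E by blast
  show "nonzero_path (emb e)" for e
    unfolding nonzero_path_def
  proof (intro conjI ballI)
    show "continuous_on {0..1} (emb e)" by (rule smooth_piece_continuous[OF sm])
    fix t :: real assume t: "t \<in> {0..1}"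
    show "emb e t \<noteq> 0"
    proof (cases "t = 0 \<or> t = 1")
      case True
      then show ?thesis using e0 e1 pnz by auto
    next
      case False
      then have "t \<in> {0<..<1}" using t by auto
      then have "emb e t \<in> open_annulus r1 r2" using E by blast
      then show ?thesis using r by (auto simp: open_annulus_def)
    qed
  qed
  show "nonzero_path (tangent (emb e))" for e by (rule tangent_nonzero[OF sm])
qed

lemma joined_edge_curves:
  assumes "\<And>e. emb e 0 = pos (src e)" "\<And>e. emb e 1 = pos (tgt e)"
  shows "consecutive src tgt P \<Longrightarrow> joined (map emb P)"
  by (induction P rule: induct_list012) (auto simp: assms)

fun link_sum :: "('a \<Rightarrow> 'a \<Rightarrow> real) \<Rightarrow> 'a list \<Rightarrow> real" where
  "link_sum c [] = 0"
| "link_sum c [x] = 0"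
| "link_sum c (x # y # r) = c x y + link_sum c (y # r)"

lemma link_sum_nth: "(\<Sum>k<length gs - 1. c (gs ! k) (gs ! Suc k)) = link_sum c gs"
proof (induction c gs rule: link_sum.induct)
  case (3 c x y r)
  have "(\<Sum>k<length (x # y # r) - 1. c ((x # y # r) ! k) ((x # y # r) ! Suc k))
      = (\<Sum>k<Suc (length r). c ((x # y # r) ! k) ((x # y # r) ! Suc k))" by simp
  also have "\<dots> = c x y + (\<Sum>k<length r. c ((y # r) ! k) ((y # r) ! Suc k))"
    by (subst sum.lessThan_Suc_shift) simp
  finally show ?case using 3 by simp
qed auto

lemma cyclic_link_sum: assumes "gs \<noteq> []"
  shows "(\<Sum>k<length gs. c (gs ! k) (gs ! ((k + 1) mod length gs))) = link_sum c gs + c (last gs) (hd gs)"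
proof -
  obtain n where n: "length gs = Suc n" using assms by (cases gs) auto
  have "(\<Sum>k<length gs. c (gs ! k) (gs ! ((k + 1) mod length gs)))
     = (\<Sum>k<n. c (gs ! k) (gs ! ((k + 1) mod length gs))) + c (gs ! n) (gs ! ((n + 1) mod length gs))"
    by (simp add: n)
  also have "(\<Sum>k<n. c (gs ! k) (gs ! ((k + 1) mod length gs))) = (\<Sum>k<n. c (gs ! k) (gs ! Suc k))"
    by (rule sum.cong) (auto simp: n)
  also have "\<dots> = link_sum c gs" using link_sum_nth[where gs=gs and c=c] n by simp
  also have "c (gs ! n) (gs ! ((n + 1) mod length gs)) = c (last gs) (hd gs)"
    using assms n by (simp add: last_conv_nth hd_conv_nth)
  finally show ?thesis .
qed

lemma link_sum_append: "xs \<noteq> [] \<Longrightarrow> ys \<noteq> [] \<Longrightarrow> link_sum c (xs @ ys) = link_sum c xs + c (last xs) (hd ys) + link_sum c ys"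
proof (induction c xs rule: link_sum.induct)
  case (2 c x)
  then show ?case by (cases ys) auto
qed auto

lemma link_sum_map: "link_sum c (map f xs) = link_sum (\<lambda>x y. c (f x) (f y)) xs"
  by (induction "\<lambda>x y. c (f x) (f y)" xs rule: link_sum.induct) auto

lemma sum_nth_map: "(\<Sum>k<length xs. f (xs ! k)) = sum_list (map f xs)"
  by (simp add: sum_list_sum_nth atLeast0LessThan)

lemma telescope_arg_change: assumes A: "\<And>e. A e = H (tgt e) - H (src e) + 2 * pi * of_int (nn e)"
  shows "P \<noteq> [] \<Longrightarrow> consecutive src tgt P \<Longrightarrow> sum_list (map A P) = H (tgt (last P)) - H (src (hd P)) + 2 * pi * of_int (sum_list (map nn P))"
proof (induction P rule: induct_list012)
  case (2 e)
  then show ?case using A by simp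
next
  case (3 e f r)
  have IH: "sum_list (map A (f#r)) = H (tgt (last (f#r))) - H (src f) + 2 * pi * of_int (sum_list (map nn (f#r)))"
    using 3 by simp
  have eq1: "sum_list (map A (e#f#r)) = A e + sum_list (map A (f#r))" by simp
  have "tgt e = src f" using 3 by simp
  then have "sum_list (map A (e#f#r)) = H (tgt (last (f#r))) - H (src e) + 2 * pi * of_int (nn e + sum_list (map nn (f#r)))"
    using eq1 IH A[of e] by (simp only: of_int_add distrib_left; linarith)
  then show ?case by simp
qed auto

lemma sum_list_eq_exp_pairing: "sum_list (map nE P) = exp_pairing nE (Defs.mult P)"
proof (induction P)
  case Nil
  then show ?case by (simp add: mult_Nil exp_pairing_def zero_fun_def)
next
  case (Cons x P)
  have "(\<Sum>e\<in>UNIV. int (unit_exp x e) * nE e) = (\<Sum>e\<in>UNIV. if e = x then nE e else 0)"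
    by (rule sum.cong) (auto simp: unit_exp_def)
  then have "(\<Sum>e\<in>UNIV. int (unit_exp x e) * nE e) = nE x" by simp
  then have "exp_pairing nE (Defs.mult (x # P)) = exp_pairing nE (Defs.mult P) + nE x"
    unfolding exp_pairing_def mult_Cons by (simp add: sum.distrib algebra_simps)
  then show ?case using Cons by simp
qed

fun link_index :: "('e \<Rightarrow> int) \<Rightarrow> ('e \<Rightarrow> 'e \<Rightarrow> int) \<Rightarrow> 'e list \<Rightarrow> int" where
  "link_index al be [] = 0"
| "link_index al be [e] = al e"
| "link_index al be (e # f # r) = al e + be e f + link_index al be (f # r)"

lemma telescope_turning: assumes A: "\<And>e. A e = U e - V e + 2 * pi * of_int (al e)"
  and C: "\<And>e f. C e f = V f - U e + 2 * pi * of_int (be e f)"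
  shows "P \<noteq> [] \<Longrightarrow> sum_list (map A P) + link_sum C P = U (last P) - V (hd P) + 2 * pi * of_int (link_index al be P)"
proof (induction P rule: induct_list012)
  case (2 e)
  then show ?case using A by simp
next
  case (3 e f r)
  have IH: "sum_list (map A (f#r)) + link_sum C (f#r) = U (last (f#r)) - V f + 2 * pi * of_int (link_index al be (f#r))"
    using 3 by simp
  have eq1: "sum_list (map A (e#f#r)) + link_sum C (e#f#r) = A e + C e f + (sum_list (map A (f#r)) + link_sum C (f#r))"
    by simp
  have "sum_list (map A (e#f#r)) + link_sum C (e#f#r) = U (last (f#r)) - V e + 2 * pi * of_int (al e + be e f + link_index al be (f#r))"
    using eq1 IH A[of e] C[of e f] by (simp only: of_int_add distrib_left; linarith)
  then show ?case by simp
qed auto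

definition parity_sign :: "int \<Rightarrow> int" where "parity_sign x = (-1) ^ nat (x mod 2)"

lemma mod2_cases: "(x::int) mod 2 = 0 \<or> x mod 2 = 1" by presburger

lemma parity_sign_add: "parity_sign (x + y) = parity_sign x * parity_sign y"
proof -
  have "(x + y) mod 2 = (x mod 2 + y mod 2) mod 2" by (simp add: mod_add_eq)
  then show ?thesis using mod2_cases[of x] mod2_cases[of y] by (auto simp: parity_sign_def)
qed

lemma parity_sign_shift: "(-1::int) ^ nat (((x mod 2) - 1) mod 2) = - parity_sign x"
  using mod2_cases[of x] by (auto simp: parity_sign_def)

lemma link_weight_parity: "P \<noteq> [] \<Longrightarrow> link_weight (\<lambda>e. parity_sign (al e)) (\<lambda>e f. parity_sign (be e f)) P = parity_sign (link_index al be P)"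
  by (induction al be P rule: link_index.induct) (auto simp: parity_sign_add)

section \<open>Index and concordance of walks\<close>

lemma walks_iff_consecutive:
  "P \<in> walks src tgt a b \<longleftrightarrow> P \<noteq> [] \<and> src (hd P) = a \<and> consecutive src tgt P \<and> tgt (last P) = b"
  unfolding walks_def consecutive_iff by (auto simp: hd_conv_nth)

lemma ind_of_walk:
  assumes net: "perfect_network r1 r2 src tgt B pos emb \<rho>"
    and P: "consecutive src tgt P" "P \<noteq> []" "src (hd P) = bi" "tgt (last P) = bj"
    and nE: "\<And>e. arg_change (emb e) = Arg (pos (tgt e)) - Arg (pos (src e)) + 2 * pi * of_int (nE e)"
  shows "ind r1 r2 \<rho> (path_curve emb P) = round ((cut_arg r1 r2 \<rho> (pos bj) - cut_arg r1 r2 \<rho> (pos bi)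
            - Arg (pos bj) + Arg (pos bi)) / (2 * pi)) - sum_list (map nE P)"
proof -
  note F = network_curve_facts[OF net]
  let ?\<gamma> = "path_of_pieces (map emb P)"
  have ch: "joined (map emb P)" by (rule joined_edge_curves[OF F(1) F(2) P(1)])
  have pp: "nonzero_path ?\<gamma> \<and> ?\<gamma> 0 = hd (map emb P) 0 \<and> ?\<gamma> 1 = last (map emb P) 1 \<and>
     arg_change ?\<gamma> = sum_list (map arg_change (map emb P))"
    by (rule pieces_path_props) (use P(2) F(3) ch in auto)
  have g0: "?\<gamma> 0 = pos bi" using pp P F(1) by (simp add: hd_map)
  have g1: "?\<gamma> 1 = pos bj" using pp P F(2) by (simp add: last_map)
  have "arg_change ?\<gamma> = sum_list (map (\<lambda>e. arg_change (emb e)) P)" using pp by (simp add: comp_def)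
  also have "\<dots> = Arg (pos bj) - Arg (pos bi) + 2 * pi * of_int (sum_list (map nE P))"
    using telescope_arg_change[of "\<lambda>e. arg_change (emb e)" "\<lambda>v. Arg (pos v)" tgt src nE P] nE P by simp
  finally have ac: "arg_change ?\<gamma> = Arg (pos bj) - Arg (pos bi) + 2 * pi * of_int (sum_list (map nE P))" .
  define K where "K = cut_arg r1 r2 \<rho> (pos bj) - cut_arg r1 r2 \<rho> (pos bi) - Arg (pos bj) + Arg (pos bi)"
  have "(cut_arg r1 r2 \<rho> (?\<gamma> 1) - cut_arg r1 r2 \<rho> (?\<gamma> 0) - arg_change ?\<gamma>) / (2 * pi)
      = K / (2 * pi) + of_int (- sum_list (map nE P))"
    unfolding g0 g1 ac K_def by (simp add: field_simps)
  then show ?thesis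
    unfolding ind_def path_curve_def K_def[symmetric]
    using round_add_int[of "K / (2 * pi)" "- sum_list (map nE P)"] by simp
qed

lemma total_turning_split:
  assumes P: "P \<noteq> []" and T: "tl0 \<noteq> []"
    and al: "\<And>e. arg_change (tangent (emb e)) = Arg (tangent (emb e) 1) - Arg (tangent (emb e) 0) + 2 * pi * of_int (alE e)"
    and be: "\<And>e f. Arg (corner (emb e) (emb f)) = Arg (tangent (emb f) 0) - Arg (tangent (emb e) 1) + 2 * pi * of_int (beE e f)"
  shows "total_turning (map emb P @ tl0) = 2 * pi * of_int (link_index alE beE P)
     + (Arg (tangent (emb (last P)) 1) - Arg (tangent (emb (hd P)) 0)
        + sum_list (map (\<lambda>g. arg_change (tangent g)) tl0) + Arg (corner (emb (last P)) (hd tl0))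
        + link_sum (\<lambda>g h. Arg (corner g h)) tl0 + Arg (corner (last tl0) (emb (hd P))))"
proof -
  let ?gs = "map emb P @ tl0"
  let ?c = "\<lambda>g h. Arg (corner g h)"
  have smooth_turning: "(\<Sum>k<length ?gs. arg_change (tangent (?gs ! k))) = sum_list (map (\<lambda>e. arg_change (tangent (emb e))) P) + sum_list (map (\<lambda>g. arg_change (tangent g)) tl0)"
    by (subst sum_nth_map[where f="\<lambda>g. arg_change (tangent g)" and xs="?gs"]) (simp add: comp_def)
  have "(\<Sum>k<length ?gs. ?c (?gs ! k) (?gs ! ((k + 1) mod length ?gs))) = link_sum ?c ?gs + ?c (last ?gs) (hd ?gs)"
    by (rule cyclic_link_sum) (use P in simp)
  also have "link_sum ?c ?gs = link_sum ?c (map emb P) + ?c (last (map emb P)) (hd tl0) + link_sum ?c tl0"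
    by (rule link_sum_append) (use P T in auto)
  also have "link_sum ?c (map emb P) = link_sum (\<lambda>e f. ?c (emb e) (emb f)) P" by (rule link_sum_map)
  finally have corner_turning: "(\<Sum>k<length ?gs. ?c (?gs ! k) (?gs ! ((k + 1) mod length ?gs)))
     = link_sum (\<lambda>e f. ?c (emb e) (emb f)) P + ?c (emb (last P)) (hd tl0) + link_sum ?c tl0 + ?c (last tl0) (emb (hd P))"
    using P T by (simp add: last_map hd_map)
  have along_walk: "sum_list (map (\<lambda>e. arg_change (tangent (emb e))) P) + link_sum (\<lambda>e f. ?c (emb e) (emb f)) P
     = Arg (tangent (emb (last P)) 1) - Arg (tangent (emb (hd P)) 0) + 2 * pi * of_int (link_index alE beE P)"
    by (rule telescope_turning[OF al be P])
  show ?thesis unfolding total_turning_def using smooth_turning corner_turning along_walk by simp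
qed

lemma walk_index:
  assumes net: "perfect_network r1 r2 src tgt B pos emb \<rho>"
  obtains K0 nE where "\<And>P. P \<in> walks src tgt bi bj \<Longrightarrow>
      ind r1 r2 \<rho> (path_curve emb P) = K0 - exp_pairing nE (Defs.mult P)"
proof -
  note F = network_curve_facts[OF net]
  have "\<exists>n::int. arg_change (emb e) = Arg (pos (tgt e)) - Arg (pos (src e)) + 2 * pi * of_int n" for e
    using arg_change_Arg[of "emb e"] F(1,2,3)[of e] unfolding nonzero_path_def by auto
  then obtain nE where nE: "\<And>e. arg_change (emb e) = Arg (pos (tgt e)) - Arg (pos (src e)) + 2 * pi * of_int (nE e)"
    by metis
  show thesis
  proof (rule that)
    fix P assume "P \<in> walks src tgt bi bj"
    then have P: "consecutive src tgt P" "P \<noteq> []" "src (hd P) = bi" "tgt (last P) = bj"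
      by (simp_all add: walks_iff_consecutive)
    show "ind r1 r2 \<rho> (path_curve emb P) = round ((cut_arg r1 r2 \<rho> (pos bj) - cut_arg r1 r2 \<rho> (pos bi)
            - Arg (pos bj) + Arg (pos bi)) / (2 * pi)) - exp_pairing nE (Defs.mult P)"
      using ind_of_walk[OF net P nE] by (simp add: sum_list_eq_exp_pairing)
  qed
qed

lemma edge_turning_integers:
  assumes net: "perfect_network r1 r2 src tgt B pos emb \<rho>"
  obtains alE beE where
    "\<And>e. arg_change (tangent (emb e))
      = Arg (tangent (emb e) 1) - Arg (tangent (emb e) 0) + 2 * pi * of_int (alE e)"
    "\<And>e f. Arg (corner (emb e) (emb f))
      = Arg (tangent (emb f) 0) - Arg (tangent (emb e) 1) + 2 * pi * of_int (beE e f)"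
proof -
  note F = network_curve_facts[OF net]
  have "\<exists>n::int. arg_change (tangent (emb e))
      = Arg (tangent (emb e) 1) - Arg (tangent (emb e) 0) + 2 * pi * of_int n" for e
    using arg_change_Arg[of "tangent (emb e)"] F(4)[of e] unfolding nonzero_path_def by auto
  then obtain alE where alE: "\<And>e. arg_change (tangent (emb e))
      = Arg (tangent (emb e) 1) - Arg (tangent (emb e) 0) + 2 * pi * of_int (alE e)"
    by metis
  have "\<exists>n::int. Arg (corner (emb e) (emb f))
      = Arg (tangent (emb f) 0) - Arg (tangent (emb e) 1) + 2 * pi * of_int n" for e f
    unfolding corner_def using F(4)[of e] F(4)[of f] by (intro Arg_div) (auto simp: nonzero_path_def)
  then obtain beE where beE: "\<And>e f. Arg (corner (emb e) (emb f))
      = Arg (tangent (emb f) 0) - Arg (tangent (emb e) 1) + 2 * pi * of_int (beE e f)"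
    by metis
  show thesis by (rule that[OF alE beE])
qed

lemma walk_sign:
  assumes net: "perfect_network r1 r2 src tgt B pos emb \<rho>"
    and source: "{e. src e = bi} = {e1}" and sink: "{e. tgt e = bj} = {eL}"
  obtains \<sigma> a b where "\<And>P. P \<in> walks src tgt bi bj \<Longrightarrow>
      (-1::int) ^ nat ((concordance (closing_curve r1 emb \<rho> (pos bi) (pos bj) P) - 1) mod 2)
        = \<sigma> * link_weight a b P"
proof -
  obtain alE beE where
    alE: "\<And>e. arg_change (tangent (emb e))
      = Arg (tangent (emb e) 1) - Arg (tangent (emb e) 0) + 2 * pi * of_int (alE e)" and
    beE: "\<And>e f. Arg (corner (emb e) (emb f))
      = Arg (tangent (emb f) 0) - Arg (tangent (emb e) 1) + 2 * pi * of_int (beE e f)"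
    by (rule edge_turning_integers[OF net]) (rule that)
  text \<open>The part of \<open>C_P\<close> closing the walk does not depend on \<open>P\<close>.\<close>
  define tl0 where "tl0 = (if (norm (pos bj) = r1) = (norm (pos bi) = r1) then [ccw_arc (pos bj) (pos bi)]
      else if norm (pos bj) = r1 then [ccw_arc (pos bj) (\<rho> 0), \<rho>, ccw_arc (\<rho> 1) (pos bi)]
      else [ccw_arc (pos bj) (\<rho> 1), reversepath \<rho>, ccw_arc (\<rho> 0) (pos bi)])"
  have tl0: "tl0 \<noteq> []" by (simp add: tl0_def)
  have closing: "closing_curve r1 emb \<rho> (pos bi) (pos bj) P = map emb P @ tl0" for P
    by (simp add: closing_curve_def tl0_def)
  define Kt where "Kt = Arg (tangent (emb eL) 1) - Arg (tangent (emb e1) 0)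
        + sum_list (map (\<lambda>g. arg_change (tangent g)) tl0) + Arg (corner (emb eL) (hd tl0))
        + link_sum (\<lambda>g h. Arg (corner g h)) tl0 + Arg (corner (last tl0) (emb e1))"
  show thesis
  proof (rule that[of "- parity_sign (round (Kt / (2 * pi)))" "\<lambda>e. parity_sign (alE e)" "\<lambda>e f. parity_sign (beE e f)"])
    fix P assume "P \<in> walks src tgt bi bj"
    then have P: "P \<noteq> []" "hd P = e1" "last P = eL"
      using source sink by (auto simp: walks_iff_consecutive)
    have "total_turning (map emb P @ tl0) / (2 * pi) = Kt / (2 * pi) + of_int (link_index alE beE P)"
      using total_turning_split[OF P(1) tl0 alE beE] P by (simp add: Kt_def field_simps)
    then have "rotation_number (map emb P @ tl0) = round (Kt / (2 * pi)) + link_index alE beE P"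
      unfolding rotation_number_def by (simp add: round_add_int)
    then show "(-1::int) ^ nat ((concordance (closing_curve r1 emb \<rho> (pos bi) (pos bj) P) - 1) mod 2)
        = - parity_sign (round (Kt / (2 * pi))) * link_weight (\<lambda>e. parity_sign (alE e)) (\<lambda>e f. parity_sign (beE e f)) P"
      unfolding closing concordance_def parity_sign_shift
      by (simp add: link_weight_parity[OF P(1)] parity_sign_add)
  qed
qed

lemma boundary_measurement_graded:
  assumes source: "{e. src e = bi} = {e1}"
    and index: "\<And>P. P \<in> walks src tgt bi bj \<Longrightarrow>
      ind r1 r2 \<rho> (path_curve emb P) = K0 - exp_pairing nE (Defs.mult P)"
    and sign: "\<And>P. P \<in> walks src tgt bi bj \<Longrightarrow>
      (-1::int) ^ nat ((concordance (closing_curve r1 emb \<rho> (pos bi) (pos bj) P) - 1) mod 2)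
        = \<sigma> * link_weight a b P"
  shows "boundary_measurement r1 r2 src tgt pos emb \<rho> bi bj
      = graded K0 nE (\<lambda>m. \<sigma> * coeff (walk_series src tgt bj a b e1) m)"
proof (rule ext, clarify)
  fix k m
  have walks_eq: "P \<in> walks src tgt bi bj \<longleftrightarrow> P \<in> walks_by_exps src tgt bj e1 (Defs.mult P)" for P
    using source by (auto simp: walks_iff_consecutive walks_by_exps_def)
  have "P \<in> walks src tgt bi bj \<and> Defs.mult P = m \<and> ind r1 r2 \<rho> (path_curve emb P) = k
      \<longleftrightarrow> P \<in> walks_by_exps src tgt bj e1 m \<and> k = K0 - exp_pairing nE m" for P
  proof
    assume "P \<in> walks src tgt bi bj \<and> Defs.mult P = m \<and> ind r1 r2 \<rho> (path_curve emb P) = k"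
    then show "P \<in> walks_by_exps src tgt bj e1 m \<and> k = K0 - exp_pairing nE m"
      using index[of P] walks_eq[of P] by auto
  next
    assume P: "P \<in> walks_by_exps src tgt bj e1 m \<and> k = K0 - exp_pairing nE m"
    then have "Defs.mult P = m" by (simp add: walks_by_exps_def)
    then show "P \<in> walks src tgt bi bj \<and> Defs.mult P = m \<and> ind r1 r2 \<rho> (path_curve emb P) = k"
      using P index[of P] walks_eq[of P] by auto
  qed
  then have walks_km: "{P \<in> walks src tgt bi bj. Defs.mult P = m \<and> ind r1 r2 \<rho> (path_curve emb P) = k}
      = (if k = K0 - exp_pairing nE m then walks_by_exps src tgt bj e1 m else {})"
    by auto
  have signed_sum: "(\<Sum>P\<in>walks_by_exps src tgt bj e1 m.
          (-1::int) ^ nat ((concordance (closing_curve r1 emb \<rho> (pos bi) (pos bj) P) - 1) mod 2))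
      = \<sigma> * walk_coeff src tgt bj a b e1 m"
    unfolding walk_coeff_def sum_distrib_left
  proof (rule sum.cong[OF refl])
    fix P assume "P \<in> walks_by_exps src tgt bj e1 m"
    then have "P \<in> walks src tgt bi bj" using walks_eq by (auto simp: walks_by_exps_def)
    then show "(-1::int) ^ nat ((concordance (closing_curve r1 emb \<rho> (pos bi) (pos bj) P) - 1) mod 2)
        = \<sigma> * link_weight a b P" by (rule sign)
  qed
  show "boundary_measurement r1 r2 src tgt pos emb \<rho> bi bj (k, m)
      = graded K0 nE (\<lambda>m. \<sigma> * coeff (walk_series src tgt bj a b e1) m) (k, m)"
    unfolding boundary_measurement_def graded_def walk_series_def coeff_Abs case_prod_conv walks_km
    using signed_sum by simp
qed

text \<open>Main theorem.  The no-cusp hypothesis is part of the definition of the concordance number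
  in the paper; the argument above does not need it.\<close>
theorem corollary2p3:
  fixes r1 r2 :: real and src tgt :: "'e::finite \<Rightarrow> 'v::finite" and B :: "'v set"
    and pos :: "'v \<Rightarrow> complex" and emb :: "'e \<Rightarrow> real \<Rightarrow> complex" and \<rho> :: "real \<Rightarrow> complex"
    and bi bj :: 'v
  assumes "perfect_network r1 r2 src tgt B pos emb \<rho>"
    and "bi \<in> B" and "is_source src tgt bi"
    and "bj \<in> B" and "is_sink src tgt bj"
    and "\<forall>P \<in> walks src tgt bi bj. no_cusps (closing_curve r1 emb \<rho> (pos bi) (pos bj) P)"
  shows "is_rational_series (boundary_measurement r1 r2 src tgt pos emb \<rho> bi bj)"
proof -
  obtain e1 where e1: "{e. src e = bi} = {e1}"
    using assms(3) card_1_singletonE unfolding is_source_def outdeg_def by blast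
  obtain eL where eL: "{e. tgt e = bj} = {eL}"
    using assms(5) card_1_singletonE unfolding is_sink_def indeg_def by blast
  obtain K0 nE where index: "\<And>P. P \<in> walks src tgt bi bj \<Longrightarrow>
      ind r1 r2 \<rho> (path_curve emb P) = K0 - exp_pairing nE (Defs.mult P)"
    by (rule walk_index[OF assms(1)]) (rule that)
  obtain \<sigma> a b where sign: "\<And>P. P \<in> walks src tgt bi bj \<Longrightarrow>
      (-1::int) ^ nat ((concordance (closing_curve r1 emb \<rho> (pos bi) (pos bj) P) - 1) mod 2)
        = \<sigma> * link_weight a b P"
    by (rule walk_sign[OF assms(1) e1 eL]) (rule that)
  have measurement: "boundary_measurement r1 r2 src tgt pos emb \<rho> bi bj
      = graded K0 nE (\<lambda>m. \<sigma> * coeff (walk_series src tgt bj a b e1) m)"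
    by (rule boundary_measurement_graded[OF e1 index sign])
  obtain q p where "is_poly q" "is_poly p" "const_coeff q = 1" "q * walk_series src tgt bj a b e1 = p"
    using walk_series_rational[of src tgt bj a b e1] by blast
  then show ?thesis
    unfolding measurement by (rule rational_of_graded_series)
qed

end
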